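(* Let $P$ be a program in normal form over a propositional signature $\Sigma$, and $q\in\Sigma$. If $P$ is $q$-forgettable, then $f_{SP}(P,q)$ is constructed using only the derivation rules (1a), (1b) and (4) (besides the rules in $R$); that is, $f_{SP}(P,q)=NF(P''')$, where $P'''$ consists of the rules of $R$ together with all rules produced by (1a), (1b) and (4).
   Context: A program over $\Sigma$ is a finite set of rules $r$ of the form $a_1\vee\dots\vee a_k\leftarrow b_1,\dots,b_l,\ not\,c_1,\dots,not\,c_m,\ not\,not\,d_1,\dots,not\,not\,d_n$ with atoms in $\Sigma$; write $H(r)=\{a_i\}$, $B^+(r)=\{b_i\}$, $B^-(r)=\{c_i\}$, $B^{--}(r)=\{d_i\}$, $B(r)=B^+(r)\cup\{not\,c: c\in B^-(r)\}\cup\{not\,not\,d:d\in B^{--}(r)\}$ (elements of $B(r)$ are literals); a rule is written $H(r)\leftarrow B(r)$. $\Sigma(r)$ is the set of atoms occurring in $r$. Normal form: $r$ is tautological if $H(r)\cap B^+(r)\ne\emptyset$ or $B^+(r)\cap B^-(r)\ne\emptyset$ or $B^-(r)\cap B^{--}(r)\ne\emptyset$; $r\in P$ is minimal in $P$ if no $r'\in P$ has ($H(r')\subseteq H(r)$ and $B(r')\subsetneq B(r)$) or ($H(r')\subsetneq H(r)$ and $B(r')\subseteq B(r)$). $P$ is in normal form if (i) for every atom $a$ and $r\in P$ at most one of $a$, $not\,a$, $not\,not\,a$ is in $B(r)$; (ii) if $a\in H(r)$ then neither $a$ nor $not\,a$ is in $B(r)$; (iii) every rule is minimal in $P$. $NF(P)$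 is obtained by: 1. removing tautological rules; 2. removing from $B^{--}(r)$ atoms in $B^+(r)$; 3. removing from $H(r)$ atoms in $B^-(r)$; 4. removing rules not minimal in the resulting program. A self-cycle on $q$ is a rule $r$ with $q\in H(r)$ and $q\in B^{--}(r)$. A program $P$ in normal form is $q$-forgettable if at least one holds: (a) every rule of $P$ in which $q$ occurs is a self-cycle on $q$; (b) $P$ contains the fact $q\leftarrow$; (c) $P$ contains no self-cycle on $q$. Notation: for a set $S$ of literals, $not\,(S)=\{not\,s:s\in S\}$, $not\,not\,(S)=\{not\,not\,s:s\in S\}$, simplifying $not\,not\,not\,p=not\,p$ and $not\,not\,not\,not\,p=not\,not\,p$. $B^{\setminus q}(r)=B(r)\setminus\{q,not\,q,not\,not\,q\}$, $H^{\setminus q}(r)=H(r)\setminus\{q\}$. For a set of rules $Q$, $D_q(Q)$ is the set of all sets $not\,(\{l_1,\dots,l_m\})\cup not\,not\,(\{l_{m+1},\dots,l_n\})$ where $\langle\{r_1,\dots,r_m\},\{r_{m+1},\dots,r_n\}\rangle$ is a partition of $Q$ (parts possibly empty), $l_i\in B^{\setminus q}(r_i)$ for $i\le m$, $l_j\in H^{\setminus q}(r_j)$ for $j>m$ (so $D_q(\emptyset)=\{\emptyset\}$). The operator $f_{SP}$: let $P'=NF(P)$, $R=\{r\in P': q\notin\Sigma(r)\}$, $R_0=\{r\in P':q\in B(r)\}$, $R_1=\{r\in P': not\,q\in B(r)\}$, $R_2=\{r\in P': not\,not\,q\in B(r), q\notin H(r)\}$, $R_3=\{r\in P': not\,not\,q\in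 B(r), q\in H(r)\}$, $R_4=\{r\in P': not\,not\,q\notin B(r), q\in H(r)\}$. $P''$ consists of: every $r\in R$; and (1a) for $r_0\in R_0$, $r_4\in R_4$: $H(r_0)\cup H^{\setminus q}(r_4)\leftarrow B^{\setminus q}(r_0)\cup B(r_4)$; (2a) for $r_0\in R_0$, $r_3\in R_3$, $r'\in R_1\cup R_4$: $H(r_0)\cup H^{\setminus q}(r_3)\leftarrow B^{\setminus q}(r_0)\cup B^{\setminus q}(r_3)\cup not\,(H^{\setminus q}(r'))\cup not\,not\,(B^{\setminus q}(r'))$; (3a) for $r_0\in R_0$, $r_3\in R_3$, $h\in H(r_0)$, $D\in D_q((R_0\cup R_2)\setminus\{r_0\})$: $H(r_0)\leftarrow B^{\setminus q}(r_0)\cup\{not\,not\,h\}\cup D\cup B^{\setminus q}(r_3)\cup not\,(H^{\setminus q}(r_3))$; (1b) for $r_2\in R_2$, $r_4\in R_4$: $H(r_2)\leftarrow B^{\setminus q}(r_2)\cup not\,(H^{\setminus q}(r_4))\cup not\,not\,(B(r_4))$; (2b) for $r_2\in R_2$, $r_3\in R_3$, $r'\in R_1\cup R_4$: $H(r_2)\leftarrow B^{\setminus q}(r_2)\cup not\,(H^{\setminus q}(r_3)\cup H^{\setminus q}(r'))\cup not\,not\,(B^{\setminus q}(r_3)\cup B^{\setminus q}(r'))$; (3b) for $r_2\in R_2$, $r_3\in R_3$, $h\in H(r_2)$, $D\in D_q((R_0\cup R_2)\setminus\{r_2\})$: $H(r_2)\leftarrow B^{\setminus q}(r_2)\cup not\,(H^{\setminus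 q}(r_3))\cup not\,not\,(B^{\setminus q}(r_3)\cup\{h\})\cup D$; (4) for $r'\in R_1\cup R_4$, $D\in D_q(R_3\cup R_4)$ with $D\cap not\,(B^{\setminus q}(r'))=\emptyset$: $H^{\setminus q}(r')\leftarrow B^{\setminus q}(r')\cup D$; (5) for $r'\in R_1\cup R_4$, $r_3\in R_3$, $r\in R_0\cup R_2$, $D\in D_q(R_4)$ with $D\cap not\,(B^{\setminus q}(r'))=\emptyset$: $H^{\setminus q}(r')\leftarrow B^{\setminus q}(r')\cup not\,(H(r)\cup H^{\setminus q}(r_3))\cup not\,not\,(B^{\setminus q}(r)\cup B^{\setminus q}(r_3))\cup D$; (6) for $r'\in R_1\cup R_4$, $r_3\in R_3$, $h\in H^{\setminus q}(r')$, $D\in D_q((R_1\cup R_4)\setminus\{r'\})$: $H^{\setminus q}(r')\leftarrow B^{\setminus q}(r')\cup not\,(H^{\setminus q}(r_3))\cup not\,not\,(B^{\setminus q}(r_3)\cup\{h\})\cup D$; (7) for $r_0\in R_0$, $r_3,r_3'\in R_3$ with $r_3\ne r_3'$, $D\in D_q((R_0\cup R_2)\setminus\{r_0\})$, $h\in H(r_0)$: $H(r_0)\cup H^{\setminus q}(r_3)\leftarrow B^{\setminus q}(r_0)\cup B^{\setminus q}(r_3)\cup not\,(H^{\setminus q}(r_3'))\cup not\,not\,(B^{\setminus q}(r_3')\cup\{h\})\cup D$. Then $f_{SP}(P,q)=NF(P'')$. *)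

theory Defs
  imports Main
begin

text \<open>Literals: an atom a, not a, not not a.\<close>
datatype 'a lit = Pos 'a | Neg 'a | NNeg 'a

fun atom :: "'a lit \<Rightarrow> 'a" where
  "atom (Pos a) = a" | "atom (Neg a) = a" | "atom (NNeg a) = a"

fun nt :: "'a lit \<Rightarrow> 'a lit" where
  "nt (Pos a) = Neg a" | "nt (Neg a) = NNeg a" | "nt (NNeg a) = Neg a"

definition nnt :: "'a lit \<Rightarrow> 'a lit" where
  "nnt l = nt (nt l)"

type_synonym 'a rule = "'a set \<times> 'a lit set"

definition H :: "'a rule \<Rightarrow> 'a set" where "H r = fst r"
definition B :: "'a rule \<Rightarrow> 'a lit set" where "B r = snd r"
definition Bp :: "'a rule \<Rightarrow> 'a set" where "Bp r = {a. Pos a \<in> B r}"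
definition Bn :: "'a rule \<Rightarrow> 'a set" where "Bn r = {a. Neg a \<in> B r}"
definition Bnn :: "'a rule \<Rightarrow> 'a set" where "Bnn r = {a. NNeg a \<in> B r}"

definition sig :: "'a rule \<Rightarrow> 'a set" where
  "sig r = H r \<union> atom ` B r"

definition program :: "'a rule set \<Rightarrow> bool" where
  "program P \<longleftrightarrow> finite P \<and> (\<forall>r\<in>P. finite (H r) \<and> finite (B r))"

definition tautological :: "'a rule \<Rightarrow> bool" where
  "tautological r \<longleftrightarrow> H r \<inter> Bp r \<noteq> {} \<or> Bp r \<inter> Bn r \<noteq> {} \<or> Bn r \<inter> Bnn r \<noteq> {}"

definition minimal_in :: "'a rule set \<Rightarrow> 'a rule \<Rightarrow> bool" where
  "minimal_in P r \<longleftrightarrow> \<not> (\<exists>r'\<in>P. (H r' \<subseteq> H r \<and> B r' \<subset> B r) \<or> (H r' \<subset> H r \<and> B r' \<subseteq> B r))"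

definition normal_form :: "'a rule set \<Rightarrow> bool" where
  "normal_form P \<longleftrightarrow>
     (\<forall>r\<in>P. \<forall>a. card ({Pos a, Neg a, NNeg a} \<inter> B r) \<le> 1) \<and>
     (\<forall>r\<in>P. \<forall>a\<in>H r. Pos a \<notin> B r \<and> Neg a \<notin> B r) \<and>
     (\<forall>r\<in>P. minimal_in P r)"

definition nf_step2 :: "'a rule \<Rightarrow> 'a rule" where
  "nf_step2 r = (H r, B r - {NNeg a | a. a \<in> Bp r})"

definition nf_step3 :: "'a rule \<Rightarrow> 'a rule" where
  "nf_step3 r = (H r - Bn r, B r)"

definition NF :: "'a rule set \<Rightarrow> 'a rule set" where
  "NF P = (let P1 = {r. \<exists>r0\<in>P. \<not> tautological r0 \<and> r = nf_step3 (nf_step2 r0)}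
           in {r \<in> P1. minimal_in P1 r})"

definition self_cycle :: "'a \<Rightarrow> 'a rule \<Rightarrow> bool" where
  "self_cycle q r \<longleftrightarrow> q \<in> H r \<and> NNeg q \<in> B r"

definition forgettable :: "'a rule set \<Rightarrow> 'a \<Rightarrow> bool" where
  "forgettable P q \<longleftrightarrow>
     (\<forall>r\<in>P. q \<in> sig r \<longrightarrow> self_cycle q r) \<or>
     ({q}, {}) \<in> P \<or>
     \<not> (\<exists>r\<in>P. self_cycle q r)"

definition Bq :: "'a \<Rightarrow> 'a rule \<Rightarrow> 'a lit set" where
  "Bq q r = B r - {Pos q, Neg q, NNeg q}"
definition Hq :: "'a \<Rightarrow> 'a rule \<Rightarrow> 'a set" where
  "Hq q r = H r - {q}"

text \<open>D_q(Q): each rule of Q contributes either not l (l in B^{\q}(r)) or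
  not not l (l in H^{\q}(r)); the choice function encodes the partition.\<close>
definition Dq :: "'a \<Rightarrow> 'a rule set \<Rightarrow> 'a lit set set" where
  "Dq q Q = {D. \<exists>c. (\<forall>r\<in>Q. c r \<in> nt ` Bq q r \<or> c r \<in> NNeg ` Hq q r) \<and> D = c ` Q}"

definition sR :: "'a rule set \<Rightarrow> 'a \<Rightarrow> 'a rule set" where
  "sR P q = {r \<in> NF P. q \<notin> sig r}"
definition R0 :: "'a rule set \<Rightarrow> 'a \<Rightarrow> 'a rule set" where
  "R0 P q = {r \<in> NF P. Pos q \<in> B r}"
definition R1 :: "'a rule set \<Rightarrow> 'a \<Rightarrow> 'a rule set" where
  "R1 P q = {r \<in> NF P. Neg q \<in> B r}"
definition R2 :: "'a rule set \<Rightarrow> 'a \<Rightarrow> 'a rule set" where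
  "R2 P q = {r \<in> NF P. NNeg q \<in> B r \<and> q \<notin> H r}"
definition R3 :: "'a rule set \<Rightarrow> 'a \<Rightarrow> 'a rule set" where
  "R3 P q = {r \<in> NF P. NNeg q \<in> B r \<and> q \<in> H r}"
definition R4 :: "'a rule set \<Rightarrow> 'a \<Rightarrow> 'a rule set" where
  "R4 P q = {r \<in> NF P. NNeg q \<notin> B r \<and> q \<in> H r}"

definition der1a :: "'a rule set \<Rightarrow> 'a \<Rightarrow> 'a rule set" where
  "der1a P q = {(H r0 \<union> Hq q r4, Bq q r0 \<union> B r4) | r0 r4.
      r0 \<in> R0 P q \<and> r4 \<in> R4 P q}"

definition der2a :: "'a rule set \<Rightarrow> 'a \<Rightarrow> 'a rule set" where
  "der2a P q = {(H r0 \<union> Hq q r3,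
       Bq q r0 \<union> Bq q r3 \<union> Neg ` Hq q r' \<union> nnt ` Bq q r') | r0 r3 r'.
      r0 \<in> R0 P q \<and> r3 \<in> R3 P q \<and> r' \<in> R1 P q \<union> R4 P q}"

definition der3a :: "'a rule set \<Rightarrow> 'a \<Rightarrow> 'a rule set" where
  "der3a P q = {(H r0,
       Bq q r0 \<union> {NNeg h} \<union> D \<union> Bq q r3 \<union> Neg ` Hq q r3) | r0 r3 h D.
      r0 \<in> R0 P q \<and> r3 \<in> R3 P q \<and> h \<in> H r0 \<and>
      D \<in> Dq q ((R0 P q \<union> R2 P q) - {r0})}"

definition der1b :: "'a rule set \<Rightarrow> 'a \<Rightarrow> 'a rule set" where
  "der1b P q = {(H r2, Bq q r2 \<union> Neg ` Hq q r4 \<union> nnt ` B r4) | r2 r4.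
      r2 \<in> R2 P q \<and> r4 \<in> R4 P q}"

definition der2b :: "'a rule set \<Rightarrow> 'a \<Rightarrow> 'a rule set" where
  "der2b P q = {(H r2,
       Bq q r2 \<union> Neg ` (Hq q r3 \<union> Hq q r') \<union> nnt ` (Bq q r3 \<union> Bq q r')) | r2 r3 r'.
      r2 \<in> R2 P q \<and> r3 \<in> R3 P q \<and> r' \<in> R1 P q \<union> R4 P q}"

definition der3b :: "'a rule set \<Rightarrow> 'a \<Rightarrow> 'a rule set" where
  "der3b P q = {(H r2,
       Bq q r2 \<union> Neg ` Hq q r3 \<union> nnt ` (Bq q r3 \<union> {Pos h}) \<union> D) | r2 r3 h D.
      r2 \<in> R2 P q \<and> r3 \<in> R3 P q \<and> h \<in> H r2 \<and>
      D \<in> Dq q ((R0 P q \<union> R2 P q) - {r2})}"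

definition der4 :: "'a rule set \<Rightarrow> 'a \<Rightarrow> 'a rule set" where
  "der4 P q = {(Hq q r', Bq q r' \<union> D) | r' D.
      r' \<in> R1 P q \<union> R4 P q \<and> D \<in> Dq q (R3 P q \<union> R4 P q) \<and>
      D \<inter> nt ` Bq q r' = {}}"

definition der5 :: "'a rule set \<Rightarrow> 'a \<Rightarrow> 'a rule set" where
  "der5 P q = {(Hq q r',
       Bq q r' \<union> Neg ` (H r \<union> Hq q r3) \<union> nnt ` (Bq q r \<union> Bq q r3) \<union> D) | r' r3 r D.
      r' \<in> R1 P q \<union> R4 P q \<and> r3 \<in> R3 P q \<and> r \<in> R0 P q \<union> R2 P q \<and>
      D \<in> Dq q (R4 P q) \<and> D \<inter> nt ` Bq q r' = {}}"

definition der6 :: "'a rule set \<Rightarrow> 'a \<Rightarrow> 'a rule set" where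
  "der6 P q = {(Hq q r',
       Bq q r' \<union> Neg ` Hq q r3 \<union> nnt ` (Bq q r3 \<union> {Pos h}) \<union> D) | r' r3 h D.
      r' \<in> R1 P q \<union> R4 P q \<and> r3 \<in> R3 P q \<and> h \<in> Hq q r' \<and>
      D \<in> Dq q ((R1 P q \<union> R4 P q) - {r'})}"

definition der7 :: "'a rule set \<Rightarrow> 'a \<Rightarrow> 'a rule set" where
  "der7 P q = {(H r0 \<union> Hq q r3,
       Bq q r0 \<union> Bq q r3 \<union> Neg ` Hq q r3' \<union> nnt ` (Bq q r3' \<union> {Pos h}) \<union> D) | r0 r3 r3' D h.
      r0 \<in> R0 P q \<and> r3 \<in> R3 P q \<and> r3' \<in> R3 P q \<and> r3 \<noteq> r3' \<and>
      D \<in> Dq q ((R0 P q \<union> R2 P q) - {r0}) \<and> h \<in> H r0}"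

definition fSP :: "'a rule set \<Rightarrow> 'a \<Rightarrow> 'a rule set" where
  "fSP P q = NF (sR P q \<union> der1a P q \<union> der2a P q \<union> der3a P q \<union> der1b P q \<union> der2b P q
                 \<union> der3b P q \<union> der4 P q \<union> der5 P q \<union> der6 P q \<union> der7 P q)"

end

theory Submission
  imports Defs
begin

text \<open>A program in normal form is its own normal form, so the sets R0, ..., R4 are read off
  P directly. Each of the derivation rules (2a), (3a), (2b), (3b), (5), (6), (7) combines a
  self-cycle on q (a rule of R3) with a rule of R0, R1, R2 or R4, and forgettability empties
  one of the two sides: in case (a) every occurrence of q lies in a self-cycle, so R0, R1, R2
  and R4 are empty; in case (c) R3 is empty; and case (b) reduces to (c), because the fact
  q \<leftarrow> would make every self-cycle on q non-minimal.\<close>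

lemma normal_form_inj_on_atom_body:
  assumes "normal_form P" "r \<in> P"
  shows "inj_on atom (B r)"
proof (rule inj_onI)
  fix x y assume xy: "x \<in> B r" "y \<in> B r" "atom x = atom y"
  define a where "a = atom x"
  have lits: "{x, y} \<subseteq> {Pos a, Neg a, NNeg a}"
    using xy(3) unfolding a_def by (cases x; cases y) auto
  have "card ({x, y}) \<le> card ({Pos a, Neg a, NNeg a} \<inter> B r)"
    using lits xy(1,2) by (intro card_mono) auto
  also have "\<dots> \<le> 1"
    using assms unfolding normal_form_def by blast
  finally show "x = y" by (cases "x = y") auto
qed

lemma normal_form_rule_not_tautological:
  assumes "normal_form P" "r \<in> P"
  shows "\<not> tautological r"
proof -
  note inj = inj_onD[OF normal_form_inj_on_atom_body[OF assms]]
  have "H r \<inter> Bp r = {}"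
    using assms unfolding normal_form_def Bp_def by blast
  moreover have "Bp r \<inter> Bn r = {}"
    using inj[of "Pos _" "Neg _"] unfolding Bp_def Bn_def by auto
  moreover have "Bn r \<inter> Bnn r = {}"
    using inj[of "Neg _" "NNeg _"] unfolding Bn_def Bnn_def by auto
  ultimately show ?thesis
    unfolding tautological_def by blast
qed

lemma normal_form_rule_nf_steps:
  assumes "normal_form P" "r \<in> P"
  shows "nf_step3 (nf_step2 r) = r"
proof -
  have "B r - {NNeg a | a. a \<in> Bp r} = B r"
    using inj_onD[OF normal_form_inj_on_atom_body[OF assms], of "Pos _" "NNeg _"]
    unfolding Bp_def by auto
  then have step2: "nf_step2 r = r"
    unfolding nf_step2_def by (simp add: H_def B_def)
  have "H r - Bn r = H r"
    using assms unfolding normal_form_def Bn_def by blast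
  then have step3: "nf_step3 r = r"
    unfolding nf_step3_def by (simp add: H_def B_def)
  show ?thesis
    using step2 step3 by simp
qed

lemma NF_normal_form:
  assumes "normal_form P"
  shows "NF P = P"
proof -
  have "{r. \<exists>r0\<in>P. \<not> tautological r0 \<and> r = nf_step3 (nf_step2 r0)} = P"
    using normal_form_rule_not_tautological[OF assms] normal_form_rule_nf_steps[OF assms]
    by force
  with assms show ?thesis
    unfolding NF_def normal_form_def by auto
qed

lemma normal_form_fact_no_self_cycle:
  assumes "normal_form P" "({q}, {}) \<in> P" "r \<in> P"
  shows "\<not> self_cycle q r"
proof
  assume "self_cycle q r"
  then have "H ({q}, {}) \<subseteq> H r \<and> B ({q}, {}) \<subset> B r"
    unfolding self_cycle_def H_def B_def by auto
  moreover have "minimal_in P r"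
    using assms(1,3) unfolding normal_form_def by blast
  ultimately show False
    using assms(2) unfolding minimal_in_def by blast
qed

lemma forgettable_R3_or_others_empty:
  assumes "normal_form P" "forgettable P q"
  shows "R3 P q = {} \<or> R0 P q \<union> R1 P q \<union> R2 P q \<union> R4 P q = {}"
proof -
  note NF_P = NF_normal_form[OF assms(1)]
  from assms(2) consider
      (only_cycles) "\<forall>r\<in>P. q \<in> sig r \<longrightarrow> self_cycle q r"
    | (no_cycles) "\<not> (\<exists>r\<in>P. self_cycle q r)"
    using normal_form_fact_no_self_cycle[OF assms(1)] unfolding forgettable_def by blast
  then show ?thesis
  proof cases
    case only_cycles
    have "Pos q \<notin> B r \<and> Neg q \<notin> B r \<and> NNeg q \<in> B r \<and> q \<in> H r"
      if "r \<in> P" "q \<in> sig r" for r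
      using only_cycles that assms(1) unfolding self_cycle_def normal_form_def by blast
    moreover have "q \<in> sig r" if "l \<in> B r" "atom l = q" for r l
      using that unfolding sig_def by force
    ultimately have "R0 P q \<union> R1 P q \<union> R2 P q \<union> R4 P q = {}"
      unfolding R0_def R1_def R2_def R4_def NF_P sig_def by fastforce
    then show ?thesis ..
  next
    case no_cycles
    then show ?thesis
      unfolding R3_def NF_P self_cycle_def by blast
  qed
qed

lemma der_using_R3_empty:
  assumes "R3 P q = {} \<or> R0 P q \<union> R1 P q \<union> R2 P q \<union> R4 P q = {}"
  shows "der2a P q = {}" "der3a P q = {}" "der2b P q = {}" "der3b P q = {}"
    "der5 P q = {}" "der6 P q = {}" "der7 P q = {}"
  using assms
  unfolding der2a_def der3a_def der2b_def der3b_def der5_def der6_def der7_def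
  by blast+

theorem theorem5:
  fixes P :: "'a rule set" and q :: 'a
  assumes "program P"
    and "normal_form P"
    and "forgettable P q"
  shows "fSP P q = NF (sR P q \<union> der1a P q \<union> der1b P q \<union> der4 P q)"
  unfolding fSP_def der_using_R3_empty[OF forgettable_R3_or_others_empty[OF assms(2,3)]]
  by (simp add: Un_ac)

end
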